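(* Let $\Sigma=(X,U,F)$ be a system and $Q\subset X$ be controlled invariant. Then \[h_{inv}(Q)\le\inf_{V}\log\rho(M_{Q,V}),\] where the infimum is over all finite $V\subset U$ that cover $Q$, and $\rho$ denotes the spectral radius.
   Context: A system is a triple $\Sigma=(X,U,F)$ where $X,U$ are nonempty sets and $F:X\times U\rightrightarrows X$ is a set-valued map with $F(x,u)\neq\emptyset$ for all $(x,u)$; for $A\subset X$, $F(A,u)=\bigcup_{x\in A}F(x,u)$. $Q\subset X$ is controlled invariant if for every $x\in Q$ there is $u\in U$ with $F(x,u)\subset Q$. For $u\in U$ put $Q_u=\{x\in Q:F(x,u)\subset Q\}$. Elements of $U^n$ are written $\omega=\omega_0\cdots\omega_{n-1}$, $\omega_{[0,i]}=\omega_0\cdots\omega_i$. A set $S\subset U^n$ is an admissible family of length $n$ for $Q$ if (a) $\omega'_0=\omega''_0$ for all $\omega',\omega''\in S$, and (b) there exists $x\in Q$ such that for every $\omega\in S$, with $I^0_\omega(x)=\{x\}$: for all $i=0,\dots,n-2$, $F(I^i_\omega(x),\omega_i)\subset\bigcup_{\omega'\in S,\ \omega'_{[0,i]}=\omega_{[0,i]}}Q_{\omega'_{i+1}}$ and $I^{i+1}_\omega(x):=F(I^i_\omega(x),\omega_i)\cap Q_{\omega_{i+1}}\neq\emptyset$; and $I^n_\omega(x):=F(I^{n-1}_\omega(x),\omega_{n-1})\subset Q$. Let $AF^n(Q)$ be the set of such families and $Q_S$ the set of $x\in Q$ satisfying (b). A set $\mathscr{S}\subset U^n$ is $(n,Q)$-spanning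 if $Q\subset\bigcup_{S\subset\mathscr{S},\,S\in AF^n(Q)}Q_S$; $r_{inv}(n,Q)$ is the infimum of $\sharp\mathscr{S}$ over such sets, and $h_{inv}(Q)=\limsup_{n\to\infty}\frac1n\log r_{inv}(n,Q)$ ($\log$ base $2$). A set $V\subset U$ is a cover of $Q$ if $Q\subset\bigcup_{a\in V}Q_a$. The admissible matrix $M_{Q,V}=(M_{ab})_{a,b\in V}$ has $M_{ab}=1$ if there exists $x\in Q_a$ with $F(x,a)\cap Q_b\neq\emptyset$, and $M_{ab}=0$ otherwise. The infimum of the empty set is $+\infty$. *)

theory Defs
  imports Complex_Main "HOL-Library.Extended_Real" "HOL-Library.Liminf_Limsup"
    "Jordan_Normal_Form.Spectral_Radius"
begin

text \<open>A system (X,U,F): state type 'x, input type 'u, set-valued map F.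
  Words in U^n are lists of length n.\<close>

definition Fimg :: "('x \<Rightarrow> 'u \<Rightarrow> 'x set) \<Rightarrow> 'x set \<Rightarrow> 'u \<Rightarrow> 'x set" where
  "Fimg F A u = (\<Union>x\<in>A. F x u)"

definition controlled_invariant :: "('x \<Rightarrow> 'u \<Rightarrow> 'x set) \<Rightarrow> 'x set \<Rightarrow> bool" where
  "controlled_invariant F Q \<longleftrightarrow> (\<forall>x\<in>Q. \<exists>u. F x u \<subseteq> Q)"

definition Qu :: "('x \<Rightarrow> 'u \<Rightarrow> 'x set) \<Rightarrow> 'x set \<Rightarrow> 'u \<Rightarrow> 'x set" where
  "Qu F Q u = {x\<in>Q. F x u \<subseteq> Q}"

fun Iset :: "('x \<Rightarrow> 'u \<Rightarrow> 'x set) \<Rightarrow> 'x set \<Rightarrow> 'u list \<Rightarrow> 'x \<Rightarrow> nat \<Rightarrow> 'x set" where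
  "Iset F Q w x 0 = {x}"
| "Iset F Q w x (Suc i) = Fimg F (Iset F Q w x i) (w ! i) \<inter> Qu F Q (w ! Suc i)"

definition adm_cond :: "('x \<Rightarrow> 'u \<Rightarrow> 'x set) \<Rightarrow> 'x set \<Rightarrow> nat \<Rightarrow> 'u list set \<Rightarrow> 'x \<Rightarrow> bool" where
  "adm_cond F Q n S x \<longleftrightarrow>
     (\<forall>w\<in>S.
        (\<forall>i. i + 2 \<le> n \<longrightarrow>
            Fimg F (Iset F Q w x i) (w ! i)
              \<subseteq> (\<Union>w'\<in>{w'\<in>S. take (Suc i) w' = take (Suc i) w}. Qu F Q (w' ! Suc i))
          \<and> Iset F Q w x (Suc i) \<noteq> {})
      \<and> Fimg F (Iset F Q w x (n - 1)) (w ! (n - 1)) \<subseteq> Q)"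

definition QS :: "('x \<Rightarrow> 'u \<Rightarrow> 'x set) \<Rightarrow> 'x set \<Rightarrow> nat \<Rightarrow> 'u list set \<Rightarrow> 'x set" where
  "QS F Q n S = {x\<in>Q. adm_cond F Q n S x}"

definition AF :: "('x \<Rightarrow> 'u \<Rightarrow> 'x set) \<Rightarrow> 'x set \<Rightarrow> nat \<Rightarrow> 'u list set set" where
  "AF F Q n = {S. 0 < n \<and> S \<noteq> {} \<and> (\<forall>w\<in>S. length w = n)
      \<and> (\<forall>w'\<in>S. \<forall>w''\<in>S. w' ! 0 = w'' ! 0)
      \<and> (\<exists>x\<in>Q. adm_cond F Q n S x)}"

definition spanning :: "('x \<Rightarrow> 'u \<Rightarrow> 'x set) \<Rightarrow> 'x set \<Rightarrow> nat \<Rightarrow> 'u list set \<Rightarrow> bool" where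
  "spanning F Q n SS \<longleftrightarrow> (\<forall>w\<in>SS. length w = n) \<and>
     Q \<subseteq> (\<Union>S\<in>{S. S \<subseteq> SS \<and> S \<in> AF F Q n}. QS F Q n S)"

definition ecard :: "'a set \<Rightarrow> ereal" where
  "ecard A = (if finite A then ereal (real (card A)) else \<infinity>)"

definition r_inv :: "('x \<Rightarrow> 'u \<Rightarrow> 'x set) \<Rightarrow> 'x set \<Rightarrow> nat \<Rightarrow> ereal" where
  "r_inv F Q n = (INF SS\<in>{SS. spanning F Q n SS}. ecard SS)"

definition elog2 :: "ereal \<Rightarrow> ereal" where
  "elog2 r = (if r = \<infinity> then \<infinity> else if r \<le> 0 then -\<infinity> else ereal (log 2 (real_of_ereal r)))"

definition h_inv :: "('x \<Rightarrow> 'u \<Rightarrow> 'x set) \<Rightarrow> 'x set \<Rightarrow> ereal" where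
  "h_inv F Q = limsup (\<lambda>n. elog2 (r_inv F Q n) / ereal (real n))"

definition is_cover :: "('x \<Rightarrow> 'u \<Rightarrow> 'x set) \<Rightarrow> 'x set \<Rightarrow> 'u set \<Rightarrow> bool" where
  "is_cover F Q V \<longleftrightarrow> Q \<subseteq> (\<Union>a\<in>V. Qu F Q a)"

definition adm_entry :: "('x \<Rightarrow> 'u \<Rightarrow> 'x set) \<Rightarrow> 'x set \<Rightarrow> 'u \<Rightarrow> 'u \<Rightarrow> complex" where
  "adm_entry F Q a b = (if \<exists>x\<in>Qu F Q a. F x a \<inter> Qu F Q b \<noteq> {} then 1 else 0)"

text \<open>M_{Q,V} as a (card V x card V) matrix, via an (arbitrary) enumeration of V;
  the spectral radius does not depend on the enumeration.\<close>
definition adm_matrix :: "('x \<Rightarrow> 'u \<Rightarrow> 'x set) \<Rightarrow> 'x set \<Rightarrow> 'u set \<Rightarrow> complex mat" where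
  "adm_matrix F Q V = (let e = (SOME e. bij_betw e {..<card V} V) in
     mat (card V) (card V) (\<lambda>(i, j). adm_entry F Q (e i) (e j)))"

end

theory Submission
  imports Defs
begin

text \<open>Fix a finite cover V of Q, and let x \<in> Q_a with a \<in> V. Since F has nonempty values
  and V covers Q, every word over V that starts with a and along which the sets I^i_\<omega>(x)
  stay nonempty can be prolonged by one more letter; therefore the words of length n with this
  property form an admissible family S with x \<in> Q_S. Each of these words is a walk in the graph
  whose adjacency matrix is M_{Q,V}, so the walks of length n form an (n,Q)-spanning set. Their
  number is the sum of the entries of M_{Q,V}^(n-1), which is O(s^n) for every
  s > \<rho>(M_{Q,V}); hence h_inv(Q) \<le> log s.\<close>

subsection \<open>Powers of a matrix with small spectral radius\<close>

lemma pow_mat_Suc_left: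
  assumes "A \<in> carrier_mat n n"
  shows "A ^\<^sub>m Suc k = A * A ^\<^sub>m k"
proof (induction k)
  case 0
  show ?case using assms by simp
next
  case (Suc k)
  have "A ^\<^sub>m Suc (Suc k) = (A * A ^\<^sub>m k) * A" using Suc by simp
  also have "\<dots> = A * (A ^\<^sub>m k * A)" using assms by (intro assoc_mult_mat) auto
  finally show ?case by simp
qed

lemma pow_smult_mat:
  assumes "A \<in> carrier_mat n n"
  shows "(c \<cdot>\<^sub>m A) ^\<^sub>m k = (c :: 'a :: comm_semiring_1) ^ k \<cdot>\<^sub>m A ^\<^sub>m k"
proof (induction k)
  case 0
  show ?case using assms by (auto intro!: eq_matI)
next
  case (Suc k)
  then show ?case
    using assms
    by (auto simp: mult_smult_assoc_mat[of _ n n] mult_smult_distrib[of _ n n] mult.assoc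
        intro!: eq_matI)
qed

lemma spectral_radius_nonneg:
  assumes "A \<in> carrier_mat n n" and "0 < n"
  shows "0 \<le> spectral_radius A"
  using spectral_radius_mem_max(1)[OF assms] by auto

lemma spectral_radius_smult_le:
  assumes A: "A \<in> carrier_mat n n" and n: "0 < n" and c: "c \<noteq> 0"
  shows "spectral_radius (c \<cdot>\<^sub>m A) \<le> norm c * spectral_radius A"
proof -
  have cA: "c \<cdot>\<^sub>m A \<in> carrier_mat n n" using A by simp
  obtain \<mu> where \<mu>: "eigenvalue (c \<cdot>\<^sub>m A) \<mu>" "spectral_radius (c \<cdot>\<^sub>m A) = norm \<mu>"
    using spectral_radius_mem_max(1)[OF cA n] unfolding spectrum_def by auto
  then obtain v where v: "v \<in> carrier_vec n" "v \<noteq> 0\<^sub>v n" "(c \<cdot>\<^sub>m A) *\<^sub>v v = \<mu> \<cdot>\<^sub>v v"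
    using cA unfolding eigenvalue_def eigenvector_def by auto
  have "c * (A *\<^sub>v v) $ i = \<mu> * v $ i" if "i < n" for i
    using arg_cong[OF v(3), of "\<lambda>u. u $ i"] A v(1) that
    by (simp add: scalar_prod_def sum_distrib_left ac_simps)
  then have "A *\<^sub>v v = (\<mu> / c) \<cdot>\<^sub>v v"
    using A v(1) c by (intro eq_vecI) (auto simp: field_simps)
  then have "eigenvalue A (\<mu> / c)"
    using A v unfolding eigenvalue_def eigenvector_def by auto
  then have "norm (\<mu> / c) \<le> spectral_radius A"
    using spectral_radius_mem_max(2)[OF A n] unfolding spectrum_def by auto
  then show ?thesis
    using \<mu>(2) c by (simp add: norm_divide divide_le_eq mult.commute)
qed

lemma spectral_radius_pow_entry_bound:
  assumes A: "A \<in> carrier_mat n n" and n: "0 < n" and s: "spectral_radius A < s"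
  obtains C where "0 < C"
    "\<And>k i j. i < n \<Longrightarrow> j < n \<Longrightarrow> norm ((A ^\<^sub>m k) $$ (i, j)) \<le> C * s ^ k"
proof -
  have s0: "0 < s" using spectral_radius_nonneg[OF A n] s by linarith
  \<comment> \<open>after rescaling by 1/s the Jordan normal form bound for spectral radius < 1 applies\<close>
  define B where "B = complex_of_real (1 / s) \<cdot>\<^sub>m A"
  have B: "B \<in> carrier_mat n n" using A unfolding B_def by simp
  have "spectral_radius B \<le> spectral_radius A / s"
    using spectral_radius_smult_le[OF A n, of "complex_of_real (1 / s)"] s0
    unfolding B_def by (simp add: norm_divide)
  also have "\<dots> < 1" using s s0 by simp
  finally obtain c where c: "\<And>k. norm_bound (B ^\<^sub>m k) c"
    using spectral_radius_jnf_norm_bound_less_1_upper_triangular[OF B] by blast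
  show ?thesis
  proof
    show "0 < max c 1" by simp
    fix k i j assume ij: "i < n" "j < n"
    have "A ^\<^sub>m k = complex_of_real s ^ k \<cdot>\<^sub>m B ^\<^sub>m k"
      using pow_smult_mat[OF A, of "complex_of_real (1 / s)" k] s0 unfolding B_def
      by (auto intro!: eq_matI simp: power_one_over)
    then have "norm ((A ^\<^sub>m k) $$ (i, j)) = s ^ k * norm ((B ^\<^sub>m k) $$ (i, j))"
      using ij B s0 by (simp add: norm_mult norm_power)
    also have "\<dots> \<le> s ^ k * max c 1"
    proof (rule mult_left_mono)
      show "norm ((B ^\<^sub>m k) $$ (i, j)) \<le> max c 1"
        using c[of k] ij B unfolding norm_bound_def by (simp add: le_max_iff_disj)
    qed (use s0 in simp)
    finally show "norm ((A ^\<^sub>m k) $$ (i, j)) \<le> max c 1 * s ^ k" by (simp add: mult.commute)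
  qed
qed

subsection \<open>Counting walks\<close>

definition walks :: "('a \<Rightarrow> 'a \<Rightarrow> bool) \<Rightarrow> 'a set \<Rightarrow> nat \<Rightarrow> 'a list set" where
  "walks E V n = {w. length w = n \<and> set w \<subseteq> V \<and> (\<forall>i. Suc i < n \<longrightarrow> E (w ! i) (w ! Suc i))}"

definition walks_from :: "('a \<Rightarrow> 'a \<Rightarrow> bool) \<Rightarrow> 'a set \<Rightarrow> nat \<Rightarrow> 'a \<Rightarrow> 'a list set" where
  "walks_from E V n a = {w \<in> walks E V n. w ! 0 = a}"

lemma finite_walks: "finite V \<Longrightarrow> finite (walks E V n)"
  by (rule finite_subset[OF _ finite_lists_length_eq[of V n]]) (auto simp: walks_def)

lemma walks_Suc_eq_UN_walks_from: "walks E V (Suc n) = (\<Union>a\<in>V. walks_from E V (Suc n) a)"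
  unfolding walks_def walks_from_def using nth_mem by fastforce

lemma walks_from_one: "a \<in> V \<Longrightarrow> walks_from E V (Suc 0) a = {[a]}"
  by (auto simp: walks_def walks_from_def length_Suc_conv)

lemma walks_from_Suc_Suc:
  assumes "a \<in> V"
  shows "walks_from E V (Suc (Suc n)) a = (#) a ` (\<Union>b\<in>{b\<in>V. E a b}. walks_from E V (Suc n) b)"
proof safe
  fix w assume w: "w \<in> walks_from E V (Suc (Suc n)) a"
  then obtain b w' where ww: "w = a # b # w'"
    by (auto simp: walks_def walks_from_def length_Suc_conv)
  have E: "E (w ! i) (w ! Suc i)" if "Suc i < Suc (Suc n)" for i
    using w that by (auto simp: walks_def walks_from_def)
  have "b # w' \<in> walks_from E V (Suc n) b"
    using w ww E[of "Suc _"] by (auto simp: walks_def walks_from_def)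
  moreover have "b \<in> V" "E a b"
    using w ww E[of 0] by (auto simp: walks_def walks_from_def)
  ultimately show "w \<in> (#) a ` (\<Union>b\<in>{b\<in>V. E a b}. walks_from E V (Suc n) b)"
    using ww by blast
next
  fix b w assume "b \<in> V" "E a b" "w \<in> walks_from E V (Suc n) b"
  then show "a # w \<in> walks_from E V (Suc (Suc n)) a"
    using assms by (auto simp: walks_def walks_from_def nth_Cons split: nat.split)
qed

lemma card_walks_Suc:
  assumes "finite V"
  shows "card (walks E V (Suc n)) = (\<Sum>a\<in>V. card (walks_from E V (Suc n) a))"
  unfolding walks_Suc_eq_UN_walks_from using assms finite_walks[OF assms]
  by (intro card_UN_disjoint) (auto simp: walks_from_def intro: finite_subset)

lemma card_walks_from_Suc_Suc:
  assumes "finite V" and "a \<in> V"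
  shows "card (walks_from E V (Suc (Suc n)) a) =
    (\<Sum>b\<in>V. if E a b then card (walks_from E V (Suc n) b) else 0)"
proof -
  have "card (walks_from E V (Suc (Suc n)) a) = card (\<Union>b\<in>{b\<in>V. E a b}. walks_from E V (Suc n) b)"
    unfolding walks_from_Suc_Suc[OF assms(2)] by (rule card_image) (simp add: inj_on_def)
  also have "\<dots> = (\<Sum>b\<in>{b\<in>V. E a b}. card (walks_from E V (Suc n) b))"
    using assms(1) finite_walks[OF assms(1)]
    by (intro card_UN_disjoint) (auto simp: walks_from_def intro: finite_subset)
  also have "\<dots> = (\<Sum>b\<in>V. if E a b then card (walks_from E V (Suc n) b) else 0)"
    using assms(1) by (simp add: sum.inter_filter)
  finally show ?thesis .
qed

definition adjacency_mat ::
    "nat \<Rightarrow> (nat \<Rightarrow> 'a) \<Rightarrow> ('a \<Rightarrow> 'a \<Rightarrow> bool) \<Rightarrow> 'b :: semiring_1 mat" where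
  "adjacency_mat N e E = mat N N (\<lambda>(i, j). if E (e i) (e j) then 1 else 0)"

lemma adjacency_mat_pow_mult_ones:
  assumes e: "bij_betw e {..<N} V" and i: "i < N"
  shows "(adjacency_mat N e E ^\<^sub>m k *\<^sub>v vec N (\<lambda>_. 1)) $ i =
    (of_nat (card (walks_from E V (Suc k) (e i))) :: 'b :: comm_semiring_1)"
  using i
proof (induction k arbitrary: i)
  case 0
  then have "e i \<in> V" using e by (auto simp: bij_betw_def)
  then show ?case using 0 by (simp add: adjacency_mat_def walks_from_one)
next
  case (Suc k)
  let ?A = "adjacency_mat N e E :: 'b mat" and ?c = "\<lambda>b. card (walks_from E V (Suc k) b)"
  have A: "?A \<in> carrier_mat N N" by (simp add: adjacency_mat_def)
  have fin: "finite V" and eV: "e i \<in> V"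
    using e Suc.prems bij_betw_finite by (auto simp: bij_betw_def)
  have "?A ^\<^sub>m Suc k *\<^sub>v vec N (\<lambda>_. 1) = ?A *\<^sub>v (?A ^\<^sub>m k *\<^sub>v vec N (\<lambda>_. 1))"
    using A by (subst pow_mat_Suc_left[OF A]) (simp add: assoc_mult_mat_vec[of _ N N _ N])
  then have "(?A ^\<^sub>m Suc k *\<^sub>v vec N (\<lambda>_. 1)) $ i =
      (\<Sum>j<N. (if E (e i) (e j) then 1 else 0) * of_nat (?c (e j)))"
    using A Suc.prems Suc.IH by (simp add: scalar_prod_def lessThan_atLeast0 adjacency_mat_def)
  also have "\<dots> = (\<Sum>b\<in>V. of_nat (if E (e i) b then ?c b else 0))"
    by (subst sum.reindex_bij_betw[OF e, symmetric]) (auto intro: sum.cong)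
  also have "\<dots> = of_nat (card (walks_from E V (Suc (Suc k)) (e i)))"
    by (simp add: card_walks_from_Suc_Suc[OF fin eV] of_nat_sum)
  finally show ?case .
qed

lemma card_walks_exponential_bound:
  assumes e: "bij_betw e {..<N} V" and N: "0 < N"
    and s: "spectral_radius (adjacency_mat N e E) < s"
  obtains C where "0 < C" "\<And>k. real (card (walks E V (Suc k))) \<le> C * s ^ k"
proof -
  let ?A = "adjacency_mat N e E :: complex mat"
  have A: "?A \<in> carrier_mat N N" by (simp add: adjacency_mat_def)
  obtain C where C: "0 < C"
    "\<And>k i j. i < N \<Longrightarrow> j < N \<Longrightarrow> norm ((?A ^\<^sub>m k) $$ (i, j)) \<le> C * s ^ k"
    using spectral_radius_pow_entry_bound[OF A N s] by blast
  have walks_from_le: "real (card (walks_from E V (Suc k) (e i))) \<le> N * (C * s ^ k)"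
    if i: "i < N" for k i
  proof -
    have "real (card (walks_from E V (Suc k) (e i))) = norm ((?A ^\<^sub>m k *\<^sub>v vec N (\<lambda>_. 1)) $ i)"
      unfolding adjacency_mat_pow_mult_ones[OF e i] by simp
    also have "\<dots> = norm (\<Sum>j<N. (?A ^\<^sub>m k) $$ (i, j))"
      using A i by (simp add: scalar_prod_def lessThan_atLeast0)
    also have "\<dots> \<le> (\<Sum>j<N. norm ((?A ^\<^sub>m k) $$ (i, j)))" by (rule norm_sum)
    also have "\<dots> \<le> (\<Sum>j<N. C * s ^ k)" using C(2) i by (intro sum_mono) auto
    finally show ?thesis by simp
  qed
  show ?thesis
  proof
    show "0 < N * N * C" using N C(1) by simp
    fix k
    have "card (walks E V (Suc k)) = (\<Sum>i<N. card (walks_from E V (Suc k) (e i)))"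
      using card_walks_Suc[OF bij_betw_finite[THEN iffD1, OF e]] sum.reindex_bij_betw[OF e, symmetric]
      by simp
    then have "real (card (walks E V (Suc k))) = (\<Sum>i<N. real (card (walks_from E V (Suc k) (e i))))"
      by simp
    also have "\<dots> \<le> (\<Sum>i<N. N * (C * s ^ k))" by (intro sum_mono walks_from_le) simp
    finally show "real (card (walks E V (Suc k))) \<le> N * N * C * s ^ k" by simp
  qed
qed

subsection \<open>Admissible families from a finite cover\<close>

lemma Iset_cong: "(\<And>j. j \<le> i \<Longrightarrow> w ! j = w' ! j) \<Longrightarrow> Iset F Q w x i = Iset F Q w' x i"
  by (induction i) auto

lemma Iset_subset_Qu: "w ! 0 = a \<Longrightarrow> x \<in> Qu F Q a \<Longrightarrow> Iset F Q w x i \<subseteq> Qu F Q (w ! i)"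
  by (induction i) auto

lemma Fimg_Iset_subset: "w ! 0 = a \<Longrightarrow> x \<in> Qu F Q a \<Longrightarrow> Fimg F (Iset F Q w x i) (w ! i) \<subseteq> Q"
  using Iset_subset_Qu[of w a x F Q i] by (auto simp: Fimg_def Qu_def)

definition realizable_words ::
    "('x \<Rightarrow> 'u \<Rightarrow> 'x set) \<Rightarrow> 'x set \<Rightarrow> 'u set \<Rightarrow> nat \<Rightarrow> 'x \<Rightarrow> 'u \<Rightarrow> 'u list set" where
  "realizable_words F Q V n x a = {w. length w = n \<and> set w \<subseteq> V \<and> w ! 0 = a \<and>
     (\<forall>i. Suc i < n \<longrightarrow> Iset F Q w x (Suc i) \<noteq> {})}"

lemma realizable_words_Iset_nonempty:
  "w \<in> realizable_words F Q V n x a \<Longrightarrow> i < n \<Longrightarrow> Iset F Q w x i \<noteq> {}"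
  by (cases i) (auto simp: realizable_words_def)

lemma realizable_words_take:
  assumes "w \<in> realizable_words F Q V n x a" and "0 < m" and "m \<le> n"
  shows "take m w \<in> realizable_words F Q V m x a"
proof -
  have "Iset F Q (take m w) x (Suc i) = Iset F Q w x (Suc i)" if "Suc i < m" for i
    using that by (intro Iset_cong) simp
  then show ?thesis
    using assms by (auto simp: realizable_words_def dest: in_set_takeD)
qed

lemma realizable_words_snoc:
  assumes w: "w \<in> realizable_words F Q V (Suc n) x a" and b: "b \<in> V"
    and y: "y \<in> Fimg F (Iset F Q w x n) (w ! n)" "y \<in> Qu F Q b"
  shows "w @ [b] \<in> realizable_words F Q V (Suc (Suc n)) x a"
proof -
  have lw: "length w = Suc n" using w by (simp add: realizable_words_def)
  have same: "Iset F Q (w @ [b]) x i = Iset F Q w x i" if "i \<le> n" for i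
    using that lw by (intro Iset_cong) (simp add: nth_append)
  have y_in: "y \<in> Iset F Q (w @ [b]) x (Suc n)"
    using y same[of n] lw by (simp add: nth_append)
  have "Iset F Q (w @ [b]) x (Suc i) \<noteq> {}" if "Suc i < Suc (Suc n)" for i
  proof (cases "i = n")
    case False
    then show ?thesis
      using w that same[of "Suc i"] by (simp add: realizable_words_def)
  qed (use y_in in auto)
  moreover have "(w @ [b]) ! 0 = a" using w lw by (simp add: realizable_words_def nth_append)
  ultimately show ?thesis
    using w b lw unfolding realizable_words_def by simp
qed

lemma realizable_words_extend:
  assumes ne: "\<And>x u. F x u \<noteq> {}" and cov: "is_cover F Q V" and x: "x \<in> Qu F Q a"
    and p: "p \<in> realizable_words F Q V (Suc m) x a" and mn: "Suc m \<le> n"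
  shows "\<exists>w\<in>realizable_words F Q V n x a. take (Suc m) w = p"
  using mn
proof (induction n rule: dec_induct)
  case base
  show ?case using p by (intro bexI[of _ p]) (simp_all add: realizable_words_def)
next
  case (step n)
  then obtain w where w: "w \<in> realizable_words F Q V n x a" "take (Suc m) w = p" by blast
  obtain k where n: "n = Suc k" using step.hyps(1) by (cases n) auto
  obtain z where z: "z \<in> Iset F Q w x k"
    using realizable_words_Iset_nonempty[OF w(1)] n by blast
  obtain y where y: "y \<in> F z (w ! k)" using ne by blast
  have yF: "y \<in> Fimg F (Iset F Q w x k) (w ! k)" using z y by (auto simp: Fimg_def)
  moreover have "w ! 0 = a" using w(1) by (simp add: realizable_words_def)
  ultimately have "y \<in> Q" using Fimg_Iset_subset[OF _ x] by blast
  then obtain b where b: "b \<in> V" "y \<in> Qu F Q b"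
    using cov unfolding is_cover_def by blast
  have "w @ [b] \<in> realizable_words F Q V (Suc n) x a"
    using realizable_words_snoc[OF _ b(1) yF b(2)] w(1) n by simp
  moreover have "take (Suc m) (w @ [b]) = p"
    using w step.hyps(1) by (simp add: realizable_words_def)
  ultimately show ?case by blast
qed

lemma realizable_words_adm_cond:
  assumes ne: "\<And>x u. F x u \<noteq> {}" and cov: "is_cover F Q V" and x: "x \<in> Qu F Q a"
  shows "adm_cond F Q n (realizable_words F Q V n x a) x"
  unfolding adm_cond_def
proof (intro ballI conjI allI impI)
  let ?S = "realizable_words F Q V n x a"
  fix w assume w: "w \<in> ?S"
  then have w0: "w ! 0 = a" and lw: "length w = n" by (simp_all add: realizable_words_def)
  show "Fimg F (Iset F Q w x (n - 1)) (w ! (n - 1)) \<subseteq> Q"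
    by (rule Fimg_Iset_subset[OF w0 x])
  fix i assume i: "i + 2 \<le> n"
  then show "Iset F Q w x (Suc i) \<noteq> {}"
    using realizable_words_Iset_nonempty[OF w, of "Suc i"] by (simp del: Iset.simps)
  show "Fimg F (Iset F Q w x i) (w ! i)
      \<subseteq> (\<Union>w'\<in>{w' \<in> ?S. take (Suc i) w' = take (Suc i) w}. Qu F Q (w' ! Suc i))"
  proof
    fix y assume y: "y \<in> Fimg F (Iset F Q w x i) (w ! i)"
    then have "y \<in> Q" using Fimg_Iset_subset[OF w0 x] by blast
    then obtain b where b: "b \<in> V" "y \<in> Qu F Q b" using cov unfolding is_cover_def by blast
    define p where "p = take (Suc i) w"
    have lp: "length p = Suc i" using i lw by (simp add: p_def)
    have p: "p \<in> realizable_words F Q V (Suc i) x a"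
      unfolding p_def using i by (intro realizable_words_take[OF w]) auto
    have "Iset F Q p x i = Iset F Q w x i" unfolding p_def by (rule Iset_cong) simp
    moreover have "p ! i = w ! i" by (simp add: p_def)
    ultimately have "p @ [b] \<in> realizable_words F Q V (Suc (Suc i)) x a"
      using realizable_words_snoc[OF p b(1) _ b(2)] y by simp
    then obtain w' where w': "w' \<in> ?S" "take (Suc (Suc i)) w' = p @ [b]"
      using realizable_words_extend[OF ne cov x] i by (metis add_2_eq_Suc')
    have "take (Suc i) w' = take (Suc i) w"
      using arg_cong[OF w'(2), of "take (Suc i)"] lp by (simp add: p_def min_def)
    moreover have "w' ! Suc i = b"
      using arg_cong[OF w'(2), of "\<lambda>v. v ! Suc i"] lp by (simp add: nth_append)
    ultimately show "y \<in> (\<Union>w'\<in>{w' \<in> ?S. take (Suc i) w' = take (Suc i) w}. Qu F Q (w' ! Suc i))"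
      using w'(1) b(2) by blast
  qed
qed

lemma realizable_words_in_AF:
  assumes ne: "\<And>x u. F x u \<noteq> {}" and cov: "is_cover F Q V"
    and x: "x \<in> Qu F Q a" and a: "a \<in> V" and n: "0 < n"
  shows "realizable_words F Q V n x a \<in> AF F Q n"
proof -
  have "[a] \<in> realizable_words F Q V (Suc 0) x a"
    using a by (simp add: realizable_words_def)
  then have "realizable_words F Q V n x a \<noteq> {}"
    using realizable_words_extend[OF ne cov x, of "[a]" 0 n] n by auto
  moreover have "x \<in> Q" using x by (simp add: Qu_def)
  ultimately show ?thesis
    using n realizable_words_adm_cond[OF ne cov x] by (auto simp: AF_def realizable_words_def)
qed

definition adm_edge :: "('x \<Rightarrow> 'u \<Rightarrow> 'x set) \<Rightarrow> 'x set \<Rightarrow> 'u \<Rightarrow> 'u \<Rightarrow> bool" where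
  "adm_edge F Q a b \<longleftrightarrow> (\<exists>x\<in>Qu F Q a. F x a \<inter> Qu F Q b \<noteq> {})"

lemma realizable_words_subset_walks:
  assumes x: "x \<in> Qu F Q a"
  shows "realizable_words F Q V n x a \<subseteq> walks (adm_edge F Q) V n"
proof
  fix w assume w: "w \<in> realizable_words F Q V n x a"
  have "adm_edge F Q (w ! i) (w ! Suc i)" if i: "Suc i < n" for i
  proof -
    obtain y where "y \<in> Iset F Q w x (Suc i)"
      using realizable_words_Iset_nonempty[OF w i] by blast
    then obtain z where z: "z \<in> Iset F Q w x i" "y \<in> F z (w ! i)" "y \<in> Qu F Q (w ! Suc i)"
      by (auto simp: Fimg_def)
    have "z \<in> Qu F Q (w ! i)"
      using Iset_subset_Qu[of w a x F Q i] w x z(1) by (auto simp: realizable_words_def)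
    then show ?thesis using z unfolding adm_edge_def by blast
  qed
  then show "w \<in> walks (adm_edge F Q) V n"
    using w by (simp add: walks_def realizable_words_def)
qed

lemma spanning_walks_adm_edge:
  assumes ne: "\<And>x u. F x u \<noteq> {}" and cov: "is_cover F Q V" and n: "0 < n"
  shows "spanning F Q n (walks (adm_edge F Q) V n)"
  unfolding spanning_def
proof (intro conjI subsetI)
  show "\<forall>w\<in>walks (adm_edge F Q) V n. length w = n" by (simp add: walks_def)
  fix x assume "x \<in> Q"
  then obtain a where a: "a \<in> V" "x \<in> Qu F Q a" using cov unfolding is_cover_def by blast
  let ?S = "realizable_words F Q V n x a"
  have "?S \<in> {S. S \<subseteq> walks (adm_edge F Q) V n \<and> S \<in> AF F Q n}"
    using realizable_words_subset_walks[OF a(2)] realizable_words_in_AF[OF ne cov a(2) a(1) n]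
    by blast
  moreover have "x \<in> QS F Q n ?S"
    using \<open>x \<in> Q\<close> realizable_words_adm_cond[OF ne cov a(2)] by (simp add: QS_def)
  ultimately show "x \<in> (\<Union>S\<in>{S. S \<subseteq> walks (adm_edge F Q) V n \<and> S \<in> AF F Q n}. QS F Q n S)"
    by blast
qed

lemma r_inv_le_card_walks:
  assumes ne: "\<And>x u. F x u \<noteq> {}" and cov: "is_cover F Q V" and V: "finite V" and n: "0 < n"
  shows "r_inv F Q n \<le> ereal (real (card (walks (adm_edge F Q) V n)))"
proof -
  have "r_inv F Q n \<le> ecard (walks (adm_edge F Q) V n)"
    unfolding r_inv_def using spanning_walks_adm_edge[OF ne cov n] by (intro INF_lower) simp
  then show ?thesis using finite_walks[OF V] by (simp add: ecard_def)
qed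

subsection \<open>Growth rates\<close>

lemma elog2_le_log: "r \<le> ereal t \<Longrightarrow> 0 < t \<Longrightarrow> elog2 r \<le> ereal (log 2 t)"
  by (cases r) (auto simp: elog2_def)

lemma limsup_elog2_exponential_bound:
  assumes K: "0 < K" and s: "0 < s" and r: "\<And>k. r (Suc k) \<le> ereal (K * s ^ k)"
  shows "limsup (\<lambda>n. elog2 (r n) / ereal (real n)) \<le> ereal (log 2 s)"
proof -
  define g where "g n = log 2 s + (log 2 K - log 2 s) / real n" for n
  have "elog2 (r n) / ereal (real n) \<le> ereal (g n)" if n0: "0 < n" for n
  proof -
    obtain k where n: "n = Suc k" using gr0_implies_Suc[OF n0] by blast
    have g: "(log 2 K + real k * log 2 s) / real n = g n"
      unfolding g_def n by (simp add: field_simps)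
    have "elog2 (r n) \<le> ereal (log 2 (K * s ^ k))"
      unfolding n by (rule elog2_le_log[OF r]) (use K s in simp)
    also have "\<dots> = ereal (log 2 K + real k * log 2 s)"
      using K s by (simp add: log_mult log_nat_power)
    finally have "elog2 (r n) / ereal (real n) \<le> ereal (log 2 K + real k * log 2 s) / ereal (real n)"
      using n by (intro ereal_divide_right_mono) simp_all
    also have "\<dots> = ereal (g n)"
      using n g by simp
    finally show ?thesis .
  qed
  then have "\<forall>\<^sub>F n in sequentially. elog2 (r n) / ereal (real n) \<le> ereal (g n)"
    by (intro eventually_sequentiallyI[of 1]) simp
  then have "limsup (\<lambda>n. elog2 (r n) / ereal (real n)) \<le> limsup (\<lambda>n. ereal (g n))"
    by (rule Limsup_mono)
  also have "\<dots> = ereal (log 2 s)"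
  proof -
    have "(\<lambda>n. (log 2 K - log 2 s) / real n) \<longlonglongrightarrow> 0"
      using filterlim_at_top_imp_at_infinity[OF filterlim_real_sequentially]
      by (rule tendsto_divide_0[OF tendsto_const])
    then have "g \<longlonglongrightarrow> log 2 s + 0" unfolding g_def by (intro tendsto_add tendsto_const)
    then have "(\<lambda>n. ereal (g n)) \<longlonglongrightarrow> ereal (log 2 s)" by (simp add: lim_ereal)
    then show ?thesis by (intro lim_imp_Limsup) simp_all
  qed
  finally show ?thesis .
qed

lemma ereal_le_elog2I:
  assumes "0 \<le> \<rho>" and le: "\<And>s. \<rho> < s \<Longrightarrow> h \<le> ereal (log 2 s)"
  shows "h \<le> elog2 (ereal \<rho>)"
proof (cases "\<rho> = 0")
  case True
  have "h \<le> ereal t" for t using le[of "2 powr t"] True by simp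
  then have "h = -\<infinity>" by (rule ereal_bot)
  then show ?thesis by simp
next
  case False
  then have \<rho>: "0 < \<rho>" using assms(1) by simp
  have "h \<le> ereal (log 2 \<rho>)"
  proof (rule ereal_le_epsilon2)
    fix \<epsilon> :: real assume "0 < \<epsilon>"
    then have "\<rho> < \<rho> * 2 powr \<epsilon>" using \<rho> by simp
    then have "h \<le> ereal (log 2 (\<rho> * 2 powr \<epsilon>))" by (rule le)
    also have "log 2 (\<rho> * 2 powr \<epsilon>) = log 2 \<rho> + \<epsilon>" using \<rho> by (simp add: log_mult)
    finally show "h \<le> ereal (log 2 \<rho>) + ereal \<epsilon>" by simp
  qed
  then show ?thesis using \<rho> by (simp add: elog2_def)
qed

lemma h_inv_empty: "h_inv F {} = -\<infinity>"
proof -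
  have r0: "r_inv F {} n \<le> 0" for n
    unfolding r_inv_def by (rule INF_lower2[of "{}"]) (simp_all add: spanning_def ecard_def)
  have "elog2 (r_inv F {} n) / ereal (real n) = -\<infinity>" for n
    using r0[of n] by (auto simp: elog2_def)
  then show ?thesis by (simp add: h_inv_def Limsup_const)
qed

lemma adm_matrix_eq_adjacency_mat:
  "adm_matrix F Q V = adjacency_mat (card V) (SOME e. bij_betw e {..<card V} V) (adm_edge F Q)"
  unfolding adm_matrix_def adjacency_mat_def adm_entry_def adm_edge_def Let_def ..

lemma spectral_radius_adm_matrix_nonneg:
  assumes "finite V" and "V \<noteq> {}"
  shows "0 \<le> spectral_radius (adm_matrix F Q V)"
proof (rule spectral_radius_nonneg)
  show "adm_matrix F Q V \<in> carrier_mat (card V) (card V)" by (simp add: adm_matrix_def Let_def)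
  show "0 < card V" using assms by (simp add: card_gt_0_iff)
qed

lemma h_inv_le_log_of_cover:
  assumes ne: "\<And>x u. F x u \<noteq> {}" and cov: "is_cover F Q V" and V: "finite V" "V \<noteq> {}"
    and s: "spectral_radius (adm_matrix F Q V) < s"
  shows "h_inv F Q \<le> ereal (log 2 s)"
proof -
  let ?N = "card V" and ?e = "SOME e. bij_betw e {..<card V} V"
  have N: "0 < ?N" using V by auto
  have e: "bij_betw ?e {..<?N} V"
    using ex_bij_betw_nat_finite[OF V(1)] unfolding atLeast0LessThan by (rule someI_ex)
  have s0: "0 < s" using spectral_radius_adm_matrix_nonneg[OF V, of F Q] s by linarith
  obtain C where C: "0 < C" "\<And>k. real (card (walks (adm_edge F Q) V (Suc k))) \<le> C * s ^ k"
    using card_walks_exponential_bound[OF e N] s unfolding adm_matrix_eq_adjacency_mat by blast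
  have "r_inv F Q (Suc k) \<le> ereal (C * s ^ k)" for k
    using r_inv_le_card_walks[OF ne cov V(1), of "Suc k"] C(2)[of k] by (auto intro: order_trans)
  then show ?thesis
    unfolding h_inv_def by (rule limsup_elog2_exponential_bound[OF C(1) s0])
qed

theorem corollary3p9:
  fixes F :: "'x \<Rightarrow> 'u \<Rightarrow> 'x set" and Q :: "'x set"
  assumes "\<And>x u. F x u \<noteq> {}"
    and "controlled_invariant F Q"
  shows "h_inv F Q \<le>
    (INF V\<in>{V. finite V \<and> is_cover F Q V}. elog2 (ereal (spectral_radius (adm_matrix F Q V))))"
proof (cases "Q = {}")
  case True
  then show ?thesis by (simp add: h_inv_empty)
next
  case False
  show ?thesis
  proof (rule INF_greatest)
    fix V assume "V \<in> {V. finite V \<and> is_cover F Q V}"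
    then have V: "finite V" and cov: "is_cover F Q V" by auto
    with False have "V \<noteq> {}" by (auto simp: is_cover_def)
    show "h_inv F Q \<le> elog2 (ereal (spectral_radius (adm_matrix F Q V)))"
      using spectral_radius_adm_matrix_nonneg[OF V \<open>V \<noteq> {}\<close>]
        h_inv_le_log_of_cover[OF assms(1) cov V \<open>V \<noteq> {}\<close>]
      by (rule ereal_le_elog2I)
  qed
qed

end
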